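(* Let $n$ and $m$ be integers with $n\geq 5$ and $m\geq 5$. For each $G\in T_{n,m}$ whose terminals are not true twins, there exists $H\in T_{n,m}$ whose terminals are true twins and which is $3$-stronger than $G$.
   Context: All graphs are finite, simple and undirected. A two-terminal graph is a graph $G$ together with two distinguished vertices $s,t$ (the terminals). $T_{n,m}$ denotes the set of all pairwise nonisomorphic (with isomorphisms preserving the set of terminals) two-terminal graphs with $n$ vertices and $m$ edges. Two vertices $u,v$ are true twins if their closed neighborhoods coincide, $N[u]=N[v]$ (in particular they are adjacent). For a positive integer $d$, a $d$-pathset of a two-terminal graph $G$ is a spanning subgraph of $G$ containing a path of length (number of edges) at most $d$ joining $s$ and $t$; $N_i^d(G)$ is the number of $d$-pathsets of $G$ with exactly $i$ edges. For $G,H\in T_{n,m}$, $H$ is $d$-stronger than $G$ if $N_i^d(H)\geq N_i^d(G)$ for every $i\in\{1,\ldots,m\}$ and $N_j^d(H)>N_j^d(G)$ for some $j\in\{1,\ldots,m\}$. *)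

theory Defs
  imports Main
begin

text \<open>A two-terminal graph with n vertices: vertex set {..<n} (labelled; all notions
below are isomorphism invariant), edge set E of 2-element subsets, terminals s, t.\<close>

definition two_terminal_graph :: "nat \<Rightarrow> nat \<Rightarrow> nat set set \<Rightarrow> nat \<Rightarrow> nat \<Rightarrow> bool" where
  "two_terminal_graph n m E s t \<longleftrightarrow>
     (\<forall>e\<in>E. \<exists>u v. e = {u, v} \<and> u \<noteq> v \<and> u < n \<and> v < n) \<and>
     card E = m \<and> s < n \<and> t < n \<and> s \<noteq> t"

definition closed_nbhd :: "nat set set \<Rightarrow> nat \<Rightarrow> nat set" where
  "closed_nbhd E u = {v. v = u \<or> {u, v} \<in> E}"

definition true_twins :: "nat set set \<Rightarrow> nat \<Rightarrow> nat \<Rightarrow> bool" where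
  "true_twins E u v \<longleftrightarrow> closed_nbhd E u = closed_nbhd E v"

text \<open>A path in edge set F from s to t, given as its list of distinct vertices;
its length is the number of edges, length p - 1.\<close>
definition is_path :: "nat set set \<Rightarrow> nat \<Rightarrow> nat \<Rightarrow> nat list \<Rightarrow> bool" where
  "is_path F s t p \<longleftrightarrow> p \<noteq> [] \<and> hd p = s \<and> last p = t \<and> distinct p \<and>
     (\<forall>i. Suc i < length p \<longrightarrow> {p ! i, p ! Suc i} \<in> F)"

definition d_pathset :: "nat \<Rightarrow> nat set set \<Rightarrow> nat \<Rightarrow> nat \<Rightarrow> nat set set \<Rightarrow> bool" where
  "d_pathset d E s t F \<longleftrightarrow> F \<subseteq> E \<and> (\<exists>p. is_path F s t p \<and> length p - 1 \<le> d)"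

definition N_count :: "nat \<Rightarrow> nat \<Rightarrow> nat set set \<Rightarrow> nat \<Rightarrow> nat \<Rightarrow> nat" where
  "N_count d i E s t = card {F. d_pathset d E s t F \<and> card F = i}"

definition d_stronger :: "nat \<Rightarrow> nat \<Rightarrow> nat set set \<Rightarrow> nat \<Rightarrow> nat \<Rightarrow> nat set set \<Rightarrow> nat \<Rightarrow> nat \<Rightarrow> bool" where
  "d_stronger d m EH sH tH EG sG tG \<longleftrightarrow>
     (\<forall>i\<in>{1..m}. N_count d i EH sH tH \<ge> N_count d i EG sG tG) \<and>
     (\<exists>j\<in>{1..m}. N_count d j EH sH tH > N_count d j EG sG tG)"

end

theory Submission
  imports Defs
begin

(* Exchanging an edge e for a non-edge f only affects the 3-pathsets that contain e resp. f,
   and among those only the pivotal ones: sets F without a short s-t path such that F + e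
   (resp. F + f) has one. So the exchanged graph is at least as strong as soon as the pivotal
   sets of e inject, size by size, into those of f.
   A first exchange creates the edge st or, if st is present, deals with a vertex w adjacent to
   exactly one terminal, and gains strictly at some size; for a pendant w this needs a case
   analysis that uses m >= 5. Afterwards the vertices adjacent to exactly one terminal are
   handled one at a time, each by an exchange that loses no pathset (moving an edge at w to t,
   or detaching a pendant w from s), until s and t are true twins. *)

section \<open>Counting subsets through pivotal sets\<close>

definition pivotal_sets :: "('a set \<Rightarrow> bool) \<Rightarrow> 'a set \<Rightarrow> 'a \<Rightarrow> nat \<Rightarrow> 'a set set" where
  "pivotal_sets P C e j = {F. F \<subseteq> C \<and> \<not> P F \<and> P (insert e F) \<and> card F = j}"

lemma finite_pivotal_sets: "finite C \<Longrightarrow> finite (pivotal_sets P C e j)"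
  unfolding pivotal_sets_def by (rule finite_subset[of _ "Pow C"]) auto

lemma card_subsets_insert:
  assumes C: "finite C" and e: "e \<notin> C" and P: "mono P"
  shows "card {F. F \<subseteq> insert e C \<and> P F \<and> card F = Suc j} =
    card {F. F \<subseteq> C \<and> P F \<and> card F = Suc j} + card {F. F \<subseteq> C \<and> P F \<and> card F = j}
      + card (pivotal_sets P C e j)"
proof -
  let ?A = "{F. F \<subseteq> C \<and> P F \<and> card F = Suc j}"
  let ?B = "{F. F \<subseteq> C \<and> P F \<and> card F = j}"
  let ?D = "pivotal_sets P C e j"
  have fin: "finite X" if "X \<subseteq> Pow C" for X
    using that C by (meson finite_Pow_iff finite_subset)
  have P_insert: "P (insert e F)" if "P F" for F
    using monoD[OF P, of F "insert e F"] that by auto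
  have split: "{F. F \<subseteq> insert e C \<and> P F \<and> card F = Suc j} = ?A \<union> insert e ` (?B \<union> ?D)"
  proof (intro equalityI subsetI)
    fix F assume F: "F \<in> {F. F \<subseteq> insert e C \<and> P F \<and> card F = Suc j}"
    show "F \<in> ?A \<union> insert e ` (?B \<union> ?D)"
    proof (cases "e \<in> F")
      case True
      then have "F = insert e (F - {e})" "F - {e} \<in> ?B \<union> ?D"
        using F fin[of "{F}"] by (auto simp: pivotal_sets_def insert_absorb)
      then show ?thesis by blast
    qed (use F in auto)
  next
    fix F assume "F \<in> ?A \<union> insert e ` (?B \<union> ?D)"
    moreover have "card (insert e G) = Suc (card G)" if "G \<subseteq> C" for G
      using that C e by (meson card_insert_disjoint finite_subset subsetD)
    ultimately show "F \<in> {F. F \<subseteq> insert e C \<and> P F \<and> card F = Suc j}"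
      using P_insert by (auto simp: pivotal_sets_def)
  qed
  have "inj_on (insert e) (?B \<union> ?D)"
    by (rule inj_onI) (use e in \<open>auto simp: pivotal_sets_def insert_ident\<close>)
  moreover have "?A \<inter> insert e ` (?B \<union> ?D) = {}" "?B \<inter> ?D = {}"
    using e by (auto simp: pivotal_sets_def)
  moreover have "finite ?A" "finite ?B" "finite ?D"
    by (auto intro: fin simp: pivotal_sets_def)
  ultimately show ?thesis
    unfolding split by (simp add: card_Un_disjoint card_image)
qed

lemma subsets_card_0: "finite C \<Longrightarrow> {F. F \<subseteq> C \<and> P F \<and> card F = 0} = {F. F = {} \<and> P F}"
  by (auto dest: finite_subset)

lemma card_subsets_exchange_le:
  assumes "finite C" "e \<notin> C" "f \<notin> C" "mono P"
    and "\<And>j. card (pivotal_sets P C e j) \<le> card (pivotal_sets P C f j)"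
  shows "card {F. F \<subseteq> insert e C \<and> P F \<and> card F = i} \<le> card {F. F \<subseteq> insert f C \<and> P F \<and> card F = i}"
proof (cases i)
  case 0
  then show ?thesis using assms(1) by (simp only: subsets_card_0 finite_insert)
next
  case (Suc j)
  then show ?thesis using assms by (simp add: card_subsets_insert)
qed

lemma card_subsets_exchange_less:
  assumes "finite C" "e \<notin> C" "f \<notin> C" "mono P"
    and "card (pivotal_sets P C e j) < card (pivotal_sets P C f j)"
  shows "card {F. F \<subseteq> insert e C \<and> P F \<and> card F = Suc j}
    < card {F. F \<subseteq> insert f C \<and> P F \<and> card F = Suc j}"
  using assms by (simp add: card_subsets_insert)

section \<open>Paths with at most three edges\<close>

definition short_path :: "nat set set \<Rightarrow> nat \<Rightarrow> nat \<Rightarrow> bool" where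
  "short_path F s t \<longleftrightarrow> {s,t} \<in> F \<or> (\<exists>a. a \<noteq> s \<and> a \<noteq> t \<and> {s,a} \<in> F \<and> {a,t} \<in> F) \<or>
     (\<exists>a b. a \<noteq> s \<and> a \<noteq> t \<and> b \<noteq> s \<and> b \<noteq> t \<and> a \<noteq> b \<and> {s,a} \<in> F \<and> {a,b} \<in> F \<and> {b,t} \<in> F)"

lemma mono_short_path: "mono (\<lambda>F. short_path F s t)"
  unfolding short_path_def by (rule monoI) (simp only: le_bool_def, blast)

lemma short_path_edge: "{s,t} \<in> F \<Longrightarrow> short_path F s t"
  unfolding short_path_def by blast

lemma short_path_via: "a \<noteq> s \<Longrightarrow> a \<noteq> t \<Longrightarrow> {s,a} \<in> F \<Longrightarrow> {a,t} \<in> F \<Longrightarrow> short_path F s t"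
  unfolding short_path_def by blast

lemma short_path_via2:
  "a \<noteq> s \<Longrightarrow> a \<noteq> t \<Longrightarrow> b \<noteq> s \<Longrightarrow> b \<noteq> t \<Longrightarrow> a \<noteq> b \<Longrightarrow> {s,a} \<in> F \<Longrightarrow> {a,b} \<in> F \<Longrightarrow> {b,t} \<in> F
    \<Longrightarrow> short_path F s t"
  unfolding short_path_def by blast

lemma short_path_has_edge_at_target: "short_path F s t \<Longrightarrow> \<exists>e\<in>F. t \<in> e"
  unfolding short_path_def by blast

lemma short_path_iff_path:
  assumes "s \<noteq> t"
  shows "(\<exists>p. is_path F s t p \<and> length p - 1 \<le> 3) \<longleftrightarrow> short_path F s t"
proof
  assume "\<exists>p. is_path F s t p \<and> length p - 1 \<le> 3"
  then obtain p where p: "is_path F s t p" "length p - 1 \<le> 3" by blast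
  have ne: "p \<noteq> []" and hd: "hd p = s" and la: "last p = t" and di: "distinct p"
    and edge: "\<And>i. Suc i < length p \<Longrightarrow> {p ! i, p ! Suc i} \<in> F"
    using p(1) unfolding is_path_def by auto
  have "0 < length p" "length p \<le> 4"
    using p(2) ne by auto
  then consider x where "p = [x]" | x y where "p = [x, y]" | x y z where "p = [x, y, z]"
    | x y z u where "p = [x, y, z, u]"
    by (auto simp: length_Suc_conv numeral_eq_Suc le_Suc_eq)
  then show "short_path F s t"
  proof cases
    case 1
    then show ?thesis using hd la assms by simp
  next
    case 2
    then show ?thesis using hd la edge[of 0] by (simp add: short_path_def)
  next
    case 3
    then show ?thesis using hd la di edge[of 0] edge[of 1] unfolding short_path_def by auto
  next
    case 4
    then show ?thesis using hd la di edge[of 0] edge[of 1] edge[of 2]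
      unfolding short_path_def by (auto simp: numeral_eq_Suc)
  qed
next
  assume "short_path F s t"
  then consider "{s,t} \<in> F" | a where "a \<noteq> s" "a \<noteq> t" "{s,a} \<in> F" "{a,t} \<in> F"
    | a b where "a \<noteq> s" "a \<noteq> t" "b \<noteq> s" "b \<noteq> t" "a \<noteq> b" "{s,a} \<in> F" "{a,b} \<in> F" "{b,t} \<in> F"
    unfolding short_path_def by blast
  then show "\<exists>p. is_path F s t p \<and> length p - 1 \<le> 3"
  proof cases
    case 1
    then have "is_path F s t [s,t]" using assms unfolding is_path_def by (auto simp: less_Suc_eq)
    then show ?thesis by force
  next
    case (2 a)
    then have "is_path F s t [s,a,t]" using assms unfolding is_path_def
      by (auto simp: less_Suc_eq nth_Cons split: nat.splits)
    then show ?thesis by force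
  next
    case (3 a b)
    then have "is_path F s t [s,a,b,t]" using assms unfolding is_path_def
      by (auto simp: less_Suc_eq nth_Cons split: nat.splits)
    then show ?thesis by force
  qed
qed

lemma N_count_3_eq:
  assumes "s \<noteq> t"
  shows "N_count 3 i E s t = card {F. F \<subseteq> E \<and> short_path F s t \<and> card F = i}"
proof -
  have "{F. d_pathset 3 E s t F \<and> card F = i} = {F. F \<subseteq> E \<and> short_path F s t \<and> card F = i}"
    using short_path_iff_path[OF assms] unfolding d_pathset_def by auto
  then show ?thesis unfolding N_count_def by simp
qed

lemma is_path_rev:
  assumes "is_path F s t p"
  shows "is_path F t s (rev p)"
  unfolding is_path_def
proof (intro conjI allI impI)
  fix i assume i: "Suc i < length (rev p)"
  let ?j = "length p - Suc (Suc i)"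
  have "{p ! ?j, p ! Suc ?j} \<in> F"
    using assms i unfolding is_path_def by simp
  moreover have "Suc ?j = length p - Suc i" using i by simp
  ultimately show "{rev p ! i, rev p ! Suc i} \<in> F"
    using i by (simp add: rev_nth insert_commute)
qed (use assms in \<open>auto simp: is_path_def hd_rev last_rev\<close>)

lemma N_count_swap: "N_count d i E t s = N_count d i E s t"
  unfolding N_count_def d_pathset_def by (metis is_path_rev rev_rev_ident length_rev)

lemma short_path_redirect_to_terminal:
  assumes "w \<noteq> s" "w \<noteq> t" "b \<noteq> s" "b \<noteq> t" "w \<noteq> b" "s \<noteq> t" "{t,w} \<notin> F"
    and "short_path (insert {w,b} F) s t"
  shows "short_path (insert {w,t} F) s t"
  using assms unfolding short_path_def by (auto simp: doubleton_eq_iff insert_commute)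

lemma short_path_remove_pendant:
  assumes "\<And>v. {w,v} \<in> F \<Longrightarrow> v = s" "w \<noteq> t" "s \<noteq> t"
    and "short_path (insert {s,w} F) s t"
  shows "short_path F s t"
  using assms unfolding short_path_def by (auto simp: doubleton_eq_iff insert_commute)

lemma short_path_remove_edge_at_nonneighbour:
  assumes "x \<noteq> s" "x \<noteq> t" "y \<noteq> s" "y \<noteq> t" "{s,x} \<notin> F" "{t,x} \<notin> F"
    and "short_path (insert {x,y} F) s t"
  shows "short_path F s t"
  using assms unfolding short_path_def by (auto simp: doubleton_eq_iff insert_commute)

lemma short_path_insert_inner_edge:
  assumes "k1 \<noteq> s" "k1 \<noteq> t" "k2 \<noteq> s" "k2 \<noteq> t" "k1 \<noteq> k2" "s \<noteq> t"
    and "short_path (insert {k1,k2} F) s t" "\<not> short_path F s t"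
  shows "({s,k1} \<in> F \<and> {k2,t} \<in> F) \<or> ({s,k2} \<in> F \<and> {k1,t} \<in> F)"
  using assms unfolding short_path_def by (auto simp: doubleton_eq_iff insert_commute)

lemma pivotal_inner_edge:
  assumes k: "k1 \<noteq> s" "k1 \<noteq> t" "k2 \<noteq> s" "k2 \<noteq> t" "k1 \<noteq> k2" and "s \<noteq> t"
    and F: "short_path (insert {k1,k2} F) s t" "\<not> short_path F s t"
  shows "{s,k1} \<in> F \<longleftrightarrow> {k2,t} \<in> F" "{s,k2} \<in> F \<longleftrightarrow> {k2,t} \<notin> F" "{k1,t} \<in> F \<or> {k2,t} \<in> F"
proof -
  have "\<not> ({s,k} \<in> F \<and> {k,t} \<in> F)" if "k \<noteq> s" "k \<noteq> t" for k
    using short_path_via[OF that] F(2) by blast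
  then show "{s,k1} \<in> F \<longleftrightarrow> {k2,t} \<in> F" "{s,k2} \<in> F \<longleftrightarrow> {k2,t} \<notin> F" "{k1,t} \<in> F \<or> {k2,t} \<in> F"
    using short_path_insert_inner_edge[OF assms] k by blast+
qed

section \<open>Comparing pathset counts\<close>

definition weakly_stronger :: "nat \<Rightarrow> nat set set \<Rightarrow> nat \<Rightarrow> nat \<Rightarrow> nat set set \<Rightarrow> nat \<Rightarrow> nat \<Rightarrow> bool" where
  "weakly_stronger d EH sH tH EG sG tG \<longleftrightarrow> (\<forall>i. N_count d i EG sG tG \<le> N_count d i EH sH tH)"

lemma weakly_stronger_trans:
  "weakly_stronger d E2 s2 t2 E1 s1 t1 \<Longrightarrow> weakly_stronger d E1 s1 t1 E s t
    \<Longrightarrow> weakly_stronger d E2 s2 t2 E s t"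
  unfolding weakly_stronger_def using order_trans by blast

lemma d_stronger_weakly_stronger_trans:
  "weakly_stronger d E2 s2 t2 E1 s1 t1 \<Longrightarrow> d_stronger d m E1 s1 t1 E s t
    \<Longrightarrow> d_stronger d m E2 s2 t2 E s t"
  unfolding weakly_stronger_def d_stronger_def by (meson order_trans less_le_trans)

lemma weakly_stronger_swap:
  "weakly_stronger d E' t s E t s \<longleftrightarrow> weakly_stronger d E' s t E s t"
  unfolding weakly_stronger_def by (simp add: N_count_swap)

lemma d_stronger_swap:
  "d_stronger d m E' t s E t s \<longleftrightarrow> d_stronger d m E' s t E s t"
  unfolding d_stronger_def by (simp add: N_count_swap)

abbreviation pivotal_edge_sets :: "nat set set \<Rightarrow> nat \<Rightarrow> nat \<Rightarrow> nat set \<Rightarrow> nat \<Rightarrow> nat set set set" where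
  "pivotal_edge_sets C s t \<equiv> pivotal_sets (\<lambda>F. short_path F s t) C"

lemma weakly_stronger_exchange_card_pivotal:
  assumes "finite E" "s \<noteq> t" "e \<in> E" "f \<notin> E"
    and "\<And>j. card (pivotal_edge_sets (E - {e}) s t e j)
      \<le> card (pivotal_edge_sets (E - {e}) s t f j)"
  shows "weakly_stronger 3 (insert f (E - {e})) s t E s t"
proof -
  have "insert e (E - {e}) = E" using assms(3) by blast
  then show ?thesis
    unfolding weakly_stronger_def N_count_3_eq[OF assms(2)]
    using card_subsets_exchange_le[OF _ _ _ mono_short_path, of "E - {e}" e f] assms by simp
qed

lemma d_stronger_exchange_card_pivotal:
  assumes "finite E" "s \<noteq> t" "e \<in> E" "f \<notin> E"
    and le: "\<And>j. card (pivotal_edge_sets (E - {e}) s t e j)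
      \<le> card (pivotal_edge_sets (E - {e}) s t f j)"
    and less: "card (pivotal_edge_sets (E - {e}) s t e j)
      < card (pivotal_edge_sets (E - {e}) s t f j)"
  shows "d_stronger 3 (card E) (insert f (E - {e})) s t E s t"
proof -
  have E: "insert e (E - {e}) = E" using assms(3) by blast
  obtain F where "F \<in> pivotal_edge_sets (E - {e}) s t f j"
    using less by fastforce
  then have "j \<le> card (E - {e})"
    using assms(1) unfolding pivotal_sets_def
    by (metis (mono_tags) card_mono finite_Diff mem_Collect_eq)
  then have "Suc j \<in> {1..card E}"
    using card_Diff1_less[OF assms(1,3)] by simp
  moreover have "N_count 3 (Suc j) E s t < N_count 3 (Suc j) (insert f (E - {e})) s t"
    unfolding N_count_3_eq[OF assms(2)]
    using card_subsets_exchange_less[OF _ _ _ mono_short_path less] assms E by simp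
  moreover have "weakly_stronger 3 (insert f (E - {e})) s t E s t"
    by (rule weakly_stronger_exchange_card_pivotal[OF assms(1-4) le])
  ultimately show ?thesis
    unfolding d_stronger_def weakly_stronger_def by blast
qed

lemma weakly_stronger_exchange:
  assumes "finite E" "s \<noteq> t" "e \<in> E" "f \<notin> E"
    and "\<And>F. F \<subseteq> E - {e} \<Longrightarrow> short_path (insert e F) s t \<Longrightarrow> short_path (insert f F) s t"
  shows "weakly_stronger 3 (insert f (E - {e})) s t E s t"
proof (rule weakly_stronger_exchange_card_pivotal[OF assms(1-4)])
  let ?P = "pivotal_edge_sets (E - {e}) s t"
  fix j
  have "?P e j \<subseteq> ?P f j"
    using assms(5) unfolding pivotal_sets_def by blast
  then show "card (?P e j) \<le> card (?P f j)"
    using assms(1) by (simp add: card_mono finite_pivotal_sets)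
qed

lemma d_stronger_exchange:
  assumes "finite E" "s \<noteq> t" "e \<in> E" "f \<notin> E"
    and "\<And>F. F \<subseteq> E - {e} \<Longrightarrow> short_path (insert e F) s t \<Longrightarrow> short_path (insert f F) s t"
    and "F0 \<subseteq> E - {e}" "\<not> short_path (insert e F0) s t" "short_path (insert f F0) s t"
  shows "d_stronger 3 (card E) (insert f (E - {e})) s t E s t"
proof (rule d_stronger_exchange_card_pivotal[OF assms(1-4)])
  let ?P = "pivotal_edge_sets (E - {e}) s t"
  have sub: "?P e j \<subseteq> ?P f j" for j
    using assms(5) unfolding pivotal_sets_def by blast
  then show "card (?P e j) \<le> card (?P f j)" for j
    using assms(1) by (simp add: card_mono finite_pivotal_sets)
  have "\<not> short_path F0 s t"
    using assms(7) monoD[OF mono_short_path, of F0 "insert e F0"] by auto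
  then have "F0 \<in> ?P f (card F0) - ?P e (card F0)"
    using assms(6-8) unfolding pivotal_sets_def by blast
  then have "?P e (card F0) \<subset> ?P f (card F0)"
    using sub by blast
  then show "card (?P e (card F0)) < card (?P f (card F0))"
    using assms(1) by (simp add: psubset_card_mono finite_pivotal_sets)
qed

section \<open>Two-terminal graphs and single exchanges\<close>

lemma two_terminal_graph_edge:
  assumes "two_terminal_graph n m E s t" "{a,b} \<in> E"
  shows "a < n \<and> b < n \<and> a \<noteq> b"
proof -
  obtain u v where "{a,b} = {u,v}" "u \<noteq> v" "u < n" "v < n"
    using assms unfolding two_terminal_graph_def by blast
  then show ?thesis by (auto simp: doubleton_eq_iff)
qed

lemma two_terminal_graph_finite:
  assumes "two_terminal_graph n m E s t"
  shows "finite E"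
proof (rule finite_subset)
  show "E \<subseteq> Pow {..<n}"
    using assms unfolding two_terminal_graph_def by auto
qed simp

lemma two_terminal_graph_swap: "two_terminal_graph n m E t s \<longleftrightarrow> two_terminal_graph n m E s t"
  unfolding two_terminal_graph_def by auto

lemma two_terminal_graph_exchange:
  assumes G: "two_terminal_graph n m E s t" and "e \<in> E" "{u,v} \<notin> E" "u \<noteq> v" "u < n" "v < n"
  shows "two_terminal_graph n m (insert {u,v} (E - {e})) s t"
proof -
  have fin: "finite E" by (rule two_terminal_graph_finite[OF G])
  have "card (insert {u,v} (E - {e})) = Suc (card (E - {e}))"
    using assms fin by simp
  also have "\<dots> = card E"
    using fin assms(2) by (rule card_Suc_Diff1)
  finally have "card (insert {u,v} (E - {e})) = card E" .
  then show ?thesis using assms unfolding two_terminal_graph_def by auto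
qed

definition distinguishing_vertices :: "nat \<Rightarrow> nat set set \<Rightarrow> nat \<Rightarrow> nat \<Rightarrow> nat set" where
  "distinguishing_vertices n E s t = {v. v < n \<and> v \<noteq> s \<and> v \<noteq> t \<and> ({s,v} \<in> E \<longleftrightarrow> {t,v} \<notin> E)}"

lemma distinguishing_vertices_swap:
  "distinguishing_vertices n E t s = distinguishing_vertices n E s t"
  unfolding distinguishing_vertices_def by blast

lemma finite_distinguishing_vertices: "finite (distinguishing_vertices n E s t)"
  unfolding distinguishing_vertices_def by simp

lemma true_twins_iff_no_distinguishing_vertices:
  assumes G: "two_terminal_graph n m E s t" and st: "{s,t} \<in> E"
  shows "true_twins E s t \<longleftrightarrow> distinguishing_vertices n E s t = {}"
proof -
  have twins: "true_twins E s t \<longleftrightarrow> (\<forall>v. (v = s \<or> {s,v} \<in> E) \<longleftrightarrow> (v = t \<or> {t,v} \<in> E))"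
    unfolding true_twins_def closed_nbhd_def by auto
  have "{t,s} \<in> E" using st by (simp add: insert_commute)
  moreover have "{s,v} \<notin> E" "{t,v} \<notin> E" if "\<not> v < n" for v
    using that two_terminal_graph_edge[OF G] by blast+
  ultimately show ?thesis
    unfolding twins distinguishing_vertices_def using st by auto
qed

lemma d_stronger_exchange_keeping_terminal_edge:
  assumes G: "two_terminal_graph n m E s t" and st: "{s,t} \<in> E" and e: "e \<in> E" "e \<noteq> {s,t}"
    and f: "{u,v} \<notin> E" "u \<noteq> v" "u < n" "v < n"
    and path: "\<And>F. F \<subseteq> E - {e} \<Longrightarrow> short_path (insert e F) s t \<Longrightarrow> short_path (insert {u,v} F) s t"
    and F0: "F0 \<subseteq> E - {e}" "\<not> short_path (insert e F0) s t" "short_path (insert {u,v} F0) s t"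
  shows "\<exists>E'. two_terminal_graph n m E' s t \<and> {s,t} \<in> E' \<and> d_stronger 3 m E' s t E s t"
proof (intro exI conjI)
  show "two_terminal_graph n m (insert {u,v} (E - {e})) s t"
    using two_terminal_graph_exchange[OF G e(1) f] .
  show "{s,t} \<in> insert {u,v} (E - {e})"
    using st e(2) by blast
  have "card E = m" "s \<noteq> t" using G unfolding two_terminal_graph_def by simp_all
  then show "d_stronger 3 m (insert {u,v} (E - {e})) s t E s t"
    using d_stronger_exchange[OF two_terminal_graph_finite[OF G] _ e(1) f(1) path F0] by simp
qed

lemma
  assumes "finite E" "s \<noteq> t" "{s,w} \<in> E" "\<And>v. {w,v} \<in> E \<Longrightarrow> v = s" "w \<noteq> t" "f \<notin> E"
  shows weakly_stronger_replace_pendant_edge: "weakly_stronger 3 (insert f (E - {{s,w}})) s t E s t"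
    and d_stronger_replace_pendant_edge:
      "F0 \<subseteq> E - {{s,w}} \<Longrightarrow> \<not> short_path F0 s t \<Longrightarrow> short_path (insert f F0) s t
        \<Longrightarrow> d_stronger 3 (card E) (insert f (E - {{s,w}})) s t E s t"
proof -
  have path: "short_path (insert f F) s t"
    if "F \<subseteq> E - {{s,w}}" "short_path (insert {s,w} F) s t" for F
  proof -
    have "short_path F s t"
      using short_path_remove_pendant[of w F s t] that assms(4,5,2) by blast
    then show ?thesis
      using monoD[OF mono_short_path, of F "insert f F"] by auto
  qed
  show "weakly_stronger 3 (insert f (E - {{s,w}})) s t E s t"
    using weakly_stronger_exchange[OF assms(1-3,6) path] .
  assume F0: "F0 \<subseteq> E - {{s,w}}" "\<not> short_path F0 s t" "short_path (insert f F0) s t"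
  have "\<not> short_path (insert {s,w} F0) s t"
    using short_path_remove_pendant[of w F0 s t] F0 assms(4,5,2) by blast
  then show "d_stronger 3 (card E) (insert f (E - {{s,w}})) s t E s t"
    using d_stronger_exchange[OF assms(1-3,6) path F0(1) _ F0(3)] by blast
qed

lemma
  assumes G: "two_terminal_graph n m E s t" and st: "{s,t} \<in> E"
    and sw: "{s,w} \<in> E" and tw: "{t,w} \<notin> E" and wt: "w \<noteq> t"
    and b: "{w,b} \<in> E" "b \<noteq> s" "b \<noteq> t"
  defines "E' \<equiv> insert {w,t} (E - {{w,b}})"
  shows two_terminal_graph_redirect_to_terminal: "two_terminal_graph n m E' s t"
    and terminal_edge_redirect_to_terminal: "{s,t} \<in> E'"
    and distinguishing_vertices_redirect_to_terminal:
      "distinguishing_vertices n E' s t = distinguishing_vertices n E s t - {w}"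
    and weakly_stronger_redirect_to_terminal: "weakly_stronger 3 E' s t E s t"
    and d_stronger_redirect_to_terminal: "d_stronger 3 m E' s t E s t"
proof -
  have st': "s \<noteq> t" and card: "card E = m" and tn: "t < n"
    using G unfolding two_terminal_graph_def by simp_all
  have w: "w \<noteq> s" "w < n" "w \<noteq> b"
    using two_terminal_graph_edge[OF G sw] two_terminal_graph_edge[OF G b(1)] by auto
  have wt': "{w,t} \<notin> E" using tw by (simp add: insert_commute)
  show "two_terminal_graph n m E' s t"
    unfolding E'_def by (rule two_terminal_graph_exchange[OF G b(1) wt' wt w(2) tn])
  show "{s,t} \<in> E'"
    unfolding E'_def using st b by (auto simp: doubleton_eq_iff)
  show "distinguishing_vertices n E' s t = distinguishing_vertices n E s t - {w}"
    unfolding E'_def distinguishing_vertices_def using w b sw st' wt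
    by (auto simp: doubleton_eq_iff)
  have path: "short_path (insert {w,t} F) s t"
    if "F \<subseteq> E - {{w,b}}" "short_path (insert {w,b} F) s t" for F
    using short_path_redirect_to_terminal[OF w(1) wt b(2,3) w(3) st' _ that(2)] that(1) tw
    by (auto simp: insert_commute)
  show "weakly_stronger 3 E' s t E s t"
    unfolding E'_def
    by (rule weakly_stronger_exchange[OF two_terminal_graph_finite[OF G] st' b(1) wt' path])
  have F0: "{{s,w}} \<subseteq> E - {{w,b}}" "\<not> short_path (insert {w,b} {{s,w}}) s t"
    "short_path (insert {w,t} {{s,w}}) s t"
    using sw w b st' wt by (auto simp: doubleton_eq_iff short_path_def)
  show "d_stronger 3 m E' s t E s t"
    unfolding E'_def card[symmetric]
    by (rule d_stronger_exchange[OF two_terminal_graph_finite[OF G] st' b(1) wt' path F0])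
qed

section \<open>Making the terminals true twins\<close>

lemma eliminate_distinguishing_neighbour:
  assumes G: "two_terminal_graph n m E s t" and n: "4 \<le> n" and st: "{s,t} \<in> E"
    and sw: "{s,w} \<in> E" and tw: "{t,w} \<notin> E" and wt: "w \<noteq> t"
  shows "\<exists>E'. two_terminal_graph n m E' s t \<and> {s,t} \<in> E' \<and>
    distinguishing_vertices n E' s t = distinguishing_vertices n E s t - {w} \<and>
    weakly_stronger 3 E' s t E s t"
proof (cases "\<exists>b. {w,b} \<in> E \<and> b \<noteq> s")
  case True
  then obtain b where b: "{w,b} \<in> E" "b \<noteq> s" by blast
  moreover have "b \<noteq> t" using b tw by (auto simp: insert_commute)
  ultimately show ?thesis
    using two_terminal_graph_redirect_to_terminal[OF G st sw tw wt]
      terminal_edge_redirect_to_terminal[OF G st sw tw wt]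
      distinguishing_vertices_redirect_to_terminal[OF G st sw tw wt]
      weakly_stronger_redirect_to_terminal[OF G st sw tw wt] by blast
next
  case False
  have st': "s \<noteq> t" using G unfolding two_terminal_graph_def by simp
  have w: "w \<noteq> s" "w < n" using two_terminal_graph_edge[OF G sw] by auto
  have "card {s,t,w} \<le> 3"
    using card_length[of "[s,t,w]"] by simp
  then have "\<not> {..<n} \<subseteq> {s,t,w}"
    using card_mono[of "{s,t,w}" "{..<n}"] n by auto
  then obtain x where x: "x < n" "x \<notin> {s,t,w}"
    by blast
  let ?E' = "insert {w,x} (E - {{s,w}})"
  have wx: "{w,x} \<notin> E" using False x by blast
  show ?thesis
  proof (intro exI conjI)
    show "two_terminal_graph n m ?E' s t"
      using two_terminal_graph_exchange[OF G sw wx _ w(2) x(1)] x by blast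
    show "{s,t} \<in> ?E'"
      using st wt by (auto simp: doubleton_eq_iff)
    show "distinguishing_vertices n ?E' s t = distinguishing_vertices n E s t - {w}"
      unfolding distinguishing_vertices_def using w x sw tw st' wt by (auto simp: doubleton_eq_iff)
    show "weakly_stronger 3 ?E' s t E s t"
      using weakly_stronger_replace_pendant_edge[OF two_terminal_graph_finite[OF G] st' sw _ wt wx]
        False by blast
  qed
qed

lemma eliminate_distinguishing_vertex:
  assumes G: "two_terminal_graph n m E s t" and n: "4 \<le> n" and st: "{s,t} \<in> E"
    and w: "w \<in> distinguishing_vertices n E s t"
  shows "\<exists>E'. two_terminal_graph n m E' s t \<and> {s,t} \<in> E' \<and>
    distinguishing_vertices n E' s t = distinguishing_vertices n E s t - {w} \<and>
    weakly_stronger 3 E' s t E s t"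
proof (cases "{s,w} \<in> E")
  case True
  then show ?thesis
    using w eliminate_distinguishing_neighbour[OF G n st True]
    unfolding distinguishing_vertices_def by blast
next
  case False
  have "{t,s} \<in> E" "{t,w} \<in> E" "w \<noteq> s"
    using st w False unfolding distinguishing_vertices_def by (auto simp: insert_commute)
  then obtain E' where "two_terminal_graph n m E' t s" "{t,s} \<in> E'"
    "distinguishing_vertices n E' t s = distinguishing_vertices n E t s - {w}"
    "weakly_stronger 3 E' t s E t s"
    using eliminate_distinguishing_neighbour[of n m E t s w] G n False
    by (auto simp: two_terminal_graph_swap)
  then show ?thesis
    by (auto simp: two_terminal_graph_swap distinguishing_vertices_swap weakly_stronger_swap
        insert_commute)
qed

lemma weakly_stronger_true_twins:
  assumes "two_terminal_graph n m E s t" and "4 \<le> n" and "{s,t} \<in> E"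
  shows "\<exists>E'. two_terminal_graph n m E' s t \<and> true_twins E' s t \<and> weakly_stronger 3 E' s t E s t"
  using assms
proof (induction "card (distinguishing_vertices n E s t)" arbitrary: E rule: less_induct)
  case less
  show ?case
  proof (cases "distinguishing_vertices n E s t = {}")
    case True
    then show ?thesis
      using less.prems true_twins_iff_no_distinguishing_vertices
      by (auto simp: weakly_stronger_def)
  next
    case False
    then obtain w where "w \<in> distinguishing_vertices n E s t" by blast
    then obtain E' where E': "two_terminal_graph n m E' s t" "{s,t} \<in> E'"
      "distinguishing_vertices n E' s t = distinguishing_vertices n E s t - {w}"
      "weakly_stronger 3 E' s t E s t"
      using eliminate_distinguishing_vertex less.prems by blast
    have "card (distinguishing_vertices n E' s t) < card (distinguishing_vertices n E s t)"
      unfolding E'(3) using \<open>w \<in> _\<close> by (rule card_Diff1_less[OF finite_distinguishing_vertices])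
    then show ?thesis
      using less.hyps[OF _ E'(1) less.prems(2) E'(2)] E'(4) weakly_stronger_trans by blast
  qed
qed

section \<open>A strict gain\<close>

(* A set F made pivotal by k1k2 routes s-ka-kb-t with {ka,kb} = {k1,k2}; replacing its edge
   s-ka by the pendant edge s-w makes it pivotal for tw instead. The edge kb-t survives and
   determines ka, so this is injective, and the pivotal set {sw} of tw is not hit. *)
lemma d_stronger_replace_inner_edge:
  assumes fin: "finite E" and st: "s \<noteq> t"
    and k: "k1 \<noteq> s" "k1 \<noteq> t" "k2 \<noteq> s" "k2 \<noteq> t" "k1 \<noteq> k2" and kk: "{k1,k2} \<in> E"
    and sw: "{s,w} \<in> E" and tw: "{t,w} \<notin> E" and pendant: "\<And>v. {w,v} \<in> E \<Longrightarrow> v = s"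
    and ws: "w \<noteq> s" and wt: "w \<noteq> t"
  shows "d_stronger 3 (card E) (insert {t,w} (E - {{k1,k2}})) s t E s t"
proof -
  let ?C = "E - {{k1,k2}}"
  let ?S = "{{s,k1},{s,k2}}"
  define Pe where "Pe = pivotal_edge_sets ?C s t {k1,k2}"
  define Pf where "Pf = pivotal_edge_sets ?C s t {t,w}"
  define g where "g F = (if {s,w} \<in> F then F else insert {s,w} (F - ?S))" for F
  have w: "w \<noteq> k1" "w \<noteq> k2"
    using pendant[of k2] pendant[of k1] kk k by (auto simp: insert_commute)
  have ne: "{s,w} \<notin> ?S" "{k1,t} \<notin> ?S" "{k2,t} \<notin> ?S" "{k1,t} \<noteq> {s,w}" "{k2,t} \<noteq> {s,w}"
    using k w st wt by (auto simp: doubleton_eq_iff)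
  have key: "{s,k1} \<in> F \<longleftrightarrow> {k2,t} \<in> F" "{s,k2} \<in> F \<longleftrightarrow> {k2,t} \<notin> F" "{k1,t} \<in> F \<or> {k2,t} \<in> F"
    if "F \<in> Pe j" for F j
    using pivotal_inner_edge[OF k st] that unfolding Pe_def pivotal_sets_def by blast+
  have g_in: "g F \<in> Pf j" if F: "F \<in> Pe j" for F j
  proof -
    have FC: "F \<subseteq> ?C" and F_no: "\<not> short_path F s t" and card_F: "card F = j"
      using F unfolding Pe_def pivotal_sets_def by auto
    have "{s,w} \<in> ?C" using sw k by (auto simp: doubleton_eq_iff)
    then have "g F \<subseteq> ?C" using FC unfolding g_def by auto
    moreover have "\<not> short_path (g F) s t"
    proof
      assume "short_path (g F) s t"
      then have "short_path (F - ?S) s t \<or> short_path F s t"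
        using short_path_remove_pendant[of w "F - ?S" s t] FC pendant wt st
        unfolding g_def by (auto split: if_splits)
      then show False
        using F_no monoD[OF mono_short_path, of "F - ?S" F] by auto
    qed
    moreover have "short_path (insert {t,w} (g F)) s t"
      using short_path_via[OF ws wt] unfolding g_def by (auto simp: insert_commute)
    moreover have "card (g F) = j"
    proof (cases "{s,w} \<in> F")
      case False
      obtain a where a: "{s,a} \<in> F" "F - ?S = F - {{s,a}}"
        using key[OF F] by (cases "{k2,t} \<in> F") auto
      have "finite F" using FC fin finite_subset by blast
      moreover have "0 < j" using calculation a(1) card_F card_gt_0_iff by blast
      ultimately show ?thesis
        using a False card_F unfolding g_def by simp
    qed (simp add: g_def card_F)
    ultimately show ?thesis unfolding Pf_def pivotal_sets_def by blast
  qed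
  have inj: "inj_on g (Pe j)" for j
  proof (rule inj_onI)
    fix X Y assume X: "X \<in> Pe j" and Y: "Y \<in> Pe j" and eq: "g X = g Y"
    have meets_S: "F \<inter> ?S \<noteq> {}" if "F \<in> Pe j" for F
      using key[OF that] by blast
    consider "{s,w} \<in> X" "{s,w} \<in> Y" | "{s,w} \<notin> X" "{s,w} \<notin> Y"
      | "({s,w} \<in> X) \<noteq> ({s,w} \<in> Y)"
      by blast
    then show "X = Y"
    proof cases
      case 1
      then show ?thesis using eq unfolding g_def by simp
    next
      case 2
      then have "X - ?S = Y - ?S"
        using eq ne(1) unfolding g_def by (simp add: insert_ident)
      moreover have "{k2,t} \<in> X \<longleftrightarrow> {k2,t} \<in> Y"
        using calculation ne(3) by blast
      ultimately show ?thesis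
        using key[OF X] key[OF Y] by blast
    next
      case 3
      show ?thesis
      proof (cases "{s,w} \<in> X")
        case True
        moreover have "{s,w} \<notin> Y" using 3 True by blast
        ultimately have "X = insert {s,w} (Y - ?S)" using eq unfolding g_def by presburger
        then have "X \<inter> ?S = {}" using ne(1) by blast
        then show ?thesis using meets_S[OF X] by blast
      next
        case False
        moreover have "{s,w} \<in> Y" using 3 False by blast
        ultimately have "Y = insert {s,w} (X - ?S)" using eq unfolding g_def by presburger
        then have "Y \<inter> ?S = {}" using ne(1) by blast
        then show ?thesis using meets_S[OF Y] by blast
      qed
    qed
  qed
  have fin_Pf: "finite (Pf j)" for j
    unfolding Pf_def using fin by (simp add: finite_pivotal_sets)
  have le: "card (Pe j) \<le> card (Pf j)" for j
    by (rule card_inj_on_le[OF inj _ fin_Pf]) (use g_in in blast)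
  have "{{s,w}} \<subseteq> ?C"
    using sw k by (auto simp: doubleton_eq_iff)
  moreover have "\<not> short_path {{s,w}} s t"
    using ws wt st unfolding short_path_def by (auto simp: doubleton_eq_iff)
  moreover have "short_path (insert {t,w} {{s,w}}) s t"
    by (rule short_path_via[OF ws wt]) (auto simp: insert_commute)
  ultimately have "{{s,w}} \<in> Pf 1"
    unfolding Pf_def pivotal_sets_def by simp
  moreover have "{{s,w}} \<notin> g ` Pe 1"
  proof
    assume "{{s,w}} \<in> g ` Pe 1"
    then obtain F where F: "F \<in> Pe 1" "g F = {{s,w}}" by blast
    have "x \<in> g F" if "x \<in> F" "x \<notin> ?S" for x
      using that unfolding g_def by simp
    then have "{k1,t} \<in> g F \<or> {k2,t} \<in> g F"
      using key(3)[OF F(1)] ne(2,3) by blast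
    then show False using F(2) ne(4,5) by simp
  qed
  ultimately have "g ` Pe 1 \<subset> Pf 1" using g_in by blast
  then have "card (g ` Pe 1) < card (Pf 1)"
    by (rule psubset_card_mono[OF fin_Pf])
  then have less: "card (Pe 1) < card (Pf 1)"
    by (simp add: card_image[OF inj])
  show ?thesis
    by (rule d_stronger_exchange_card_pivotal[OF fin st kk tw le[unfolded Pe_def Pf_def]
          less[unfolded Pe_def Pf_def]])
qed

lemma edges_if_single_terminal_neighbour:
  assumes G: "two_terminal_graph n m E s t"
    and pendant: "\<And>v. {w,v} \<in> E \<Longrightarrow> v = s"
    and twins_off_w: "\<And>v. v \<noteq> w \<Longrightarrow> v \<noteq> s \<Longrightarrow> v \<noteq> t \<Longrightarrow> {s,v} \<in> E \<longleftrightarrow> {t,v} \<in> E"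
    and near: "\<And>x y. x \<noteq> s \<Longrightarrow> x \<noteq> t \<Longrightarrow> y \<noteq> s \<Longrightarrow> y \<noteq> t \<Longrightarrow> {x,y} \<in> E
      \<Longrightarrow> {s,x} \<in> E \<or> {t,x} \<in> E"
    and k: "\<And>v. v \<noteq> s \<Longrightarrow> {t,v} \<in> E \<Longrightarrow> v = k"
  shows "E \<subseteq> {{s,t},{s,w},{s,k},{t,k}}"
proof
  have inner: "u = k" if "u \<noteq> s" "u \<noteq> t" "v \<noteq> s" "v \<noteq> t" "{u,v} \<in> E" for u v
  proof -
    have "u \<noteq> w" using pendant that by blast
    then have "{t,u} \<in> E" using near[OF that] twins_off_w[of u] that by blast
    then show ?thesis using k that(1) by blast
  qed
  have at_s: "v = t \<or> v = w \<or> v = k" if "{s,v} \<in> E" for v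
  proof (rule ccontr)
    assume v: "\<not> (v = t \<or> v = w \<or> v = k)"
    moreover have "v \<noteq> s" using two_terminal_graph_edge[OF G that] by simp
    ultimately have "{t,v} \<in> E" using twins_off_w[of v] that by simp
    then show False using k \<open>v \<noteq> s\<close> v by blast
  qed
  have at_t: "v = s \<or> v = k" if "{t,v} \<in> E" for v
    using that k by blast
  fix e assume "e \<in> E"
  then obtain u v where e: "e = {u,v}" "u \<noteq> v"
    using G unfolding two_terminal_graph_def by blast
  then have uv: "{u,v} \<in> E" "{v,u} \<in> E"
    using \<open>e \<in> E\<close> by (simp_all add: insert_commute)
  consider "u = s" | "u = t" | "v = s" | "v = t" | "u \<noteq> s" "u \<noteq> t" "v \<noteq> s" "v \<noteq> t"
    by blast
  then show "e \<in> {{s,t},{s,w},{s,k},{t,k}}"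
  proof cases
    case 1
    then show ?thesis using at_s uv(1) e(1) by auto
  next
    case 2
    then show ?thesis using at_t uv(1) e(1) by auto
  next
    case 3
    then have "u = t \<or> u = w \<or> u = k" "e = {s,u}"
      using at_s uv(2) e(1) by (simp_all add: insert_commute)
    then show ?thesis by auto
  next
    case 4
    then have "u = s \<or> u = k" "e = {t,u}"
      using at_t uv(2) e(1) by (simp_all add: insert_commute)
    then show ?thesis by (auto simp: insert_commute)
  next
    case 5
    then show ?thesis using inner[of u v] inner[of v u] uv e(2) by blast
  qed
qed

lemma exists_two_terminal_neighbours:
  assumes G: "two_terminal_graph n m E s t" and m: "5 \<le> m"
    and pendant: "\<And>v. {w,v} \<in> E \<Longrightarrow> v = s"
    and twins_off_w: "\<And>v. v \<noteq> w \<Longrightarrow> v \<noteq> s \<Longrightarrow> v \<noteq> t \<Longrightarrow> {s,v} \<in> E \<longleftrightarrow> {t,v} \<in> E"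
    and near: "\<And>x y. x \<noteq> s \<Longrightarrow> x \<noteq> t \<Longrightarrow> y \<noteq> s \<Longrightarrow> y \<noteq> t \<Longrightarrow> {x,y} \<in> E
      \<Longrightarrow> {s,x} \<in> E \<or> {t,x} \<in> E"
  obtains k1 k2 where "k1 \<noteq> k2" "k1 \<noteq> s" "k2 \<noteq> s" "{t,k1} \<in> E" "{t,k2} \<in> E"
proof -
  have "\<exists>k1 k2. k1 \<noteq> k2 \<and> k1 \<noteq> s \<and> k2 \<noteq> s \<and> {t,k1} \<in> E \<and> {t,k2} \<in> E"
  proof (rule ccontr)
    assume "\<not> ?thesis"
    then obtain k where "\<And>v. v \<noteq> s \<Longrightarrow> {t,v} \<in> E \<Longrightarrow> v = k"
      by (cases "\<exists>v. v \<noteq> s \<and> {t,v} \<in> E") blast+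
    then have "card E \<le> card {{s,t},{s,w},{s,k},{t,k}}"
      by (intro card_mono edges_if_single_terminal_neighbour[OF G pendant twins_off_w near]) auto
    also have "\<dots> \<le> 4"
      using card_length[of "[{s,t},{s,w},{s,k},{t,k}]"] by simp
    finally show False using G m unfolding two_terminal_graph_def by simp
  qed
  then show ?thesis using that by blast
qed

lemma d_stronger_exchange_pendant_edge:
  assumes G: "two_terminal_graph n m E s t" and st: "{s,t} \<in> E"
    and sw: "{s,w} \<in> E" and pendant: "\<And>v. {w,v} \<in> E \<Longrightarrow> v = s" and wt: "w \<noteq> t"
    and f: "{u,v} \<notin> E" "u \<noteq> v" "u < n" "v < n"
    and F0: "F0 \<subseteq> E - {{s,w}}" "\<not> short_path F0 s t" "short_path (insert {u,v} F0) s t"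
  shows "\<exists>E'. two_terminal_graph n m E' s t \<and> {s,t} \<in> E' \<and> d_stronger 3 m E' s t E s t"
proof (intro exI conjI)
  show "two_terminal_graph n m (insert {u,v} (E - {{s,w}})) s t"
    by (rule two_terminal_graph_exchange[OF G sw f])
  show "{s,t} \<in> insert {u,v} (E - {{s,w}})"
    using st wt by (auto simp: doubleton_eq_iff)
  have "card E = m" "s \<noteq> t" using G unfolding two_terminal_graph_def by simp_all
  then show "d_stronger 3 m (insert {u,v} (E - {{s,w}})) s t E s t"
    using d_stronger_replace_pendant_edge[OF two_terminal_graph_finite[OF G] _ sw pendant wt f(1)
        F0] by simp
qed

lemma d_stronger_pendant_other_distinguishing:
  assumes G: "two_terminal_graph n m E s t" and st: "{s,t} \<in> E"
    and sw: "{s,w} \<in> E" and pendant: "\<And>v. {w,v} \<in> E \<Longrightarrow> v = s" and wt: "w \<noteq> t"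
    and u: "u \<in> distinguishing_vertices n E s t" "u \<noteq> w"
  shows "\<exists>E'. two_terminal_graph n m E' s t \<and> {s,t} \<in> E' \<and> d_stronger 3 m E' s t E s t"
proof -
  have st': "s \<noteq> t" and sn: "s < n" and tn: "t < n"
    using G unfolding two_terminal_graph_def by simp_all
  have u': "u < n" "u \<noteq> s" "u \<noteq> t" "{s,u} \<in> E \<longleftrightarrow> {t,u} \<notin> E"
    using u(1) unfolding distinguishing_vertices_def by auto
  have not_path: "\<not> short_path {{a,u}} s t" for a
    using u' st' unfolding short_path_def by (auto simp: doubleton_eq_iff)
  have path: "short_path (insert {t,u} {{s,u}}) s t" "short_path (insert {s,u} {{t,u}}) s t"
    by (rule short_path_via[OF u'(2,3)]; auto simp: insert_commute)+
  show ?thesis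
  proof (cases "{s,u} \<in> E")
    case True
    then have "{{s,u}} \<subseteq> E - {{s,w}}" using u(2) by (auto simp: doubleton_eq_iff)
    then show ?thesis
      using d_stronger_exchange_pendant_edge[OF G st sw pendant wt _ _ tn u'(1) _ not_path path(1)]
        u' True by blast
  next
    case False
    then have "{{t,u}} \<subseteq> E - {{s,w}}" using u' st' by (auto simp: doubleton_eq_iff)
    then show ?thesis
      using d_stronger_exchange_pendant_edge[OF G st sw pendant wt _ _ sn u'(1) _ not_path path(2)]
        u' False by blast
  qed
qed

lemma d_stronger_pendant_cross_non_edge:
  assumes G: "two_terminal_graph n m E s t" and st: "{s,t} \<in> E"
    and sw: "{s,w} \<in> E" and pendant: "\<And>v. {w,v} \<in> E \<Longrightarrow> v = s" and wt: "w \<noteq> t"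
    and xy: "x \<noteq> s" "x \<noteq> t" "y \<noteq> s" "y \<noteq> t" "x \<noteq> y" "x \<noteq> w"
      "{s,x} \<in> E" "{t,y} \<in> E" "{x,y} \<notin> E"
  shows "\<exists>E'. two_terminal_graph n m E' s t \<and> {s,t} \<in> E' \<and> d_stronger 3 m E' s t E s t"
proof (rule d_stronger_exchange_pendant_edge[OF G st sw pendant wt xy(9,5)])
  have "s \<noteq> t" using G unfolding two_terminal_graph_def by simp
  then show "{{s,x},{t,y}} \<subseteq> E - {{s,w}}" "\<not> short_path {{s,x},{t,y}} s t"
    using xy unfolding short_path_def by (auto simp: doubleton_eq_iff)
  show "short_path (insert {x,y} {{s,x},{t,y}}) s t"
    by (rule short_path_via2[OF xy(1-5)]) (auto simp: insert_commute)
  show "x < n" "y < n"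
    using two_terminal_graph_edge[OF G xy(7)] two_terminal_graph_edge[OF G xy(8)] by auto
qed

lemma d_stronger_far_edge:
  assumes G: "two_terminal_graph n m E s t" and st: "{s,t} \<in> E"
    and sw: "{s,w} \<in> E" and tw: "{t,w} \<notin> E" and wt: "w \<noteq> t"
    and xy: "x \<noteq> s" "x \<noteq> t" "y \<noteq> s" "y \<noteq> t" "{x,y} \<in> E" "{s,x} \<notin> E" "{t,x} \<notin> E"
  shows "\<exists>E'. two_terminal_graph n m E' s t \<and> {s,t} \<in> E' \<and> d_stronger 3 m E' s t E s t"
proof (rule d_stronger_exchange_keeping_terminal_edge[OF G st xy(5) _ tw wt[symmetric]])
  have st': "s \<noteq> t" using G unfolding two_terminal_graph_def by simp
  have ws: "w \<noteq> s" and "w < n" using two_terminal_graph_edge[OF G sw] by auto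
  then show "t < n" "w < n" using G unfolding two_terminal_graph_def by simp_all
  show "{x,y} \<noteq> {s,t}" using xy(1,2) by (auto simp: doubleton_eq_iff)
  show "short_path (insert {t,w} F) s t"
    if "F \<subseteq> E - {{x,y}}" "short_path (insert {x,y} F) s t" for F
  proof -
    have "short_path F s t"
      using short_path_remove_edge_at_nonneighbour[OF xy(1-4) _ _ that(2)] that(1) xy(6,7) by blast
    then show ?thesis using monoD[OF mono_short_path, of F "insert {t,w} F"] by auto
  qed
  show "{{s,w}} \<subseteq> E - {{x,y}}" using sw xy(1,3) by (auto simp: doubleton_eq_iff)
  show "\<not> short_path (insert {x,y} {{s,w}}) s t"
    using short_path_has_edge_at_target[of "insert {x,y} {{s,w}}" s t] xy(2,4) st' wt by auto
  show "short_path (insert {t,w} {{s,w}}) s t"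
    by (rule short_path_via[OF ws wt]) (auto simp: insert_commute)
qed

lemma d_stronger_pendant_twins_elsewhere:
  assumes G: "two_terminal_graph n m E s t" and m: "5 \<le> m" and st: "{s,t} \<in> E"
    and sw: "{s,w} \<in> E" and pendant: "\<And>v. {w,v} \<in> E \<Longrightarrow> v = s" and wt: "w \<noteq> t"
    and twins_off_w: "\<And>v. v \<noteq> w \<Longrightarrow> v \<noteq> s \<Longrightarrow> v \<noteq> t \<Longrightarrow> {s,v} \<in> E \<longleftrightarrow> {t,v} \<in> E"
    and cross: "\<And>x y. x \<noteq> s \<Longrightarrow> x \<noteq> t \<Longrightarrow> y \<noteq> s \<Longrightarrow> y \<noteq> t \<Longrightarrow> x \<noteq> y \<Longrightarrow> x \<noteq> w
      \<Longrightarrow> {s,x} \<in> E \<Longrightarrow> {t,y} \<in> E \<Longrightarrow> {x,y} \<in> E"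
    and near: "\<And>x y. x \<noteq> s \<Longrightarrow> x \<noteq> t \<Longrightarrow> y \<noteq> s \<Longrightarrow> y \<noteq> t \<Longrightarrow> {x,y} \<in> E
      \<Longrightarrow> {s,x} \<in> E \<or> {t,x} \<in> E"
  shows "\<exists>E'. two_terminal_graph n m E' s t \<and> {s,t} \<in> E' \<and> d_stronger 3 m E' s t E s t"
proof -
  have st': "s \<noteq> t" and tn: "t < n" and card: "card E = m"
    using G unfolding two_terminal_graph_def by simp_all
  have ws: "w \<noteq> s" and wn: "w < n" using two_terminal_graph_edge[OF G sw] by auto
  have tw: "{t,w} \<notin> E" using pendant[of t] st' by (auto simp: insert_commute)
  obtain k1 k2 where k: "k1 \<noteq> k2" "k1 \<noteq> s" "k2 \<noteq> s" "{t,k1} \<in> E" "{t,k2} \<in> E"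
    by (rule exists_two_terminal_neighbours[OF G m pendant twins_off_w near])
  have kt: "k1 \<noteq> t" "k2 \<noteq> t"
    using two_terminal_graph_edge[OF G k(4)] two_terminal_graph_edge[OF G k(5)] by auto
  have "k1 \<noteq> w" using k(4) tw by blast
  then have "{s,k1} \<in> E" using twins_off_w[OF _ k(2) kt(1)] k(4) by simp
  then have kk: "{k1,k2} \<in> E"
    by (rule cross[OF k(2) kt(1) k(3) kt(2) k(1) \<open>k1 \<noteq> w\<close> _ k(5)])
  show ?thesis
  proof (intro exI conjI)
    show "two_terminal_graph n m (insert {t,w} (E - {{k1,k2}})) s t"
      using two_terminal_graph_exchange[OF G kk tw _ tn wn] wt by simp
    show "{s,t} \<in> insert {t,w} (E - {{k1,k2}})"
      using st k(2,3) by (auto simp: doubleton_eq_iff)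
    show "d_stronger 3 m (insert {t,w} (E - {{k1,k2}})) s t E s t"
      using d_stronger_replace_inner_edge[OF two_terminal_graph_finite[OF G] st' k(2) kt(1) k(3)
          kt(2) k(1) kk sw tw pendant ws wt] card
      by simp
  qed
qed

lemma d_stronger_pendant_neighbour:
  assumes G: "two_terminal_graph n m E s t" and m: "5 \<le> m" and st: "{s,t} \<in> E"
    and sw: "{s,w} \<in> E" and pendant: "\<And>v. {w,v} \<in> E \<Longrightarrow> v = s" and wt: "w \<noteq> t"
  shows "\<exists>E'. two_terminal_graph n m E' s t \<and> {s,t} \<in> E' \<and> d_stronger 3 m E' s t E s t"
proof -
  have tw: "{t,w} \<notin> E"
    using pendant[of t] G unfolding two_terminal_graph_def by (auto simp: insert_commute)
  consider (other) u where "u \<in> distinguishing_vertices n E s t" "u \<noteq> w"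
    | (cross) x y where "x \<noteq> s" "x \<noteq> t" "y \<noteq> s" "y \<noteq> t" "x \<noteq> y" "x \<noteq> w"
        "{s,x} \<in> E" "{t,y} \<in> E" "{x,y} \<notin> E"
    | (far) x y where "x \<noteq> s" "x \<noteq> t" "y \<noteq> s" "y \<noteq> t" "{x,y} \<in> E" "{s,x} \<notin> E" "{t,x} \<notin> E"
    | (rest) "distinguishing_vertices n E s t \<subseteq> {w}"
        "\<And>x y. x \<noteq> s \<Longrightarrow> x \<noteq> t \<Longrightarrow> y \<noteq> s \<Longrightarrow> y \<noteq> t \<Longrightarrow> x \<noteq> y \<Longrightarrow> x \<noteq> w
          \<Longrightarrow> {s,x} \<in> E \<Longrightarrow> {t,y} \<in> E \<Longrightarrow> {x,y} \<in> E"
        "\<And>x y. x \<noteq> s \<Longrightarrow> x \<noteq> t \<Longrightarrow> y \<noteq> s \<Longrightarrow> y \<noteq> t \<Longrightarrow> {x,y} \<in> E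
          \<Longrightarrow> {s,x} \<in> E \<or> {t,x} \<in> E"
    by blast
  then show ?thesis
  proof cases
    case (other u)
    show ?thesis by (rule d_stronger_pendant_other_distinguishing[OF G st sw pendant wt other])
  next
    case (cross x y)
    show ?thesis by (rule d_stronger_pendant_cross_non_edge[OF G st sw pendant wt cross])
  next
    case (far x y)
    show ?thesis by (rule d_stronger_far_edge[OF G st sw tw wt far])
  next
    case rest
    have twins_off_w: "{s,v} \<in> E \<longleftrightarrow> {t,v} \<in> E" if "v \<noteq> w" "v \<noteq> s" "v \<noteq> t" for v
    proof (cases "v < n")
      case True
      have "v \<notin> distinguishing_vertices n E s t" using rest(1) that(1) by blast
      then show ?thesis using True that unfolding distinguishing_vertices_def by simp
    next
      case False
      then show ?thesis
        using two_terminal_graph_edge[OF G, of s v] two_terminal_graph_edge[OF G, of t v] by auto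
    qed
    show ?thesis
      by (rule d_stronger_pendant_twins_elsewhere[OF G m st sw pendant wt twins_off_w rest(2,3)])
  qed
qed

lemma d_stronger_distinguishing_neighbour:
  assumes G: "two_terminal_graph n m E s t" and m: "5 \<le> m" and st: "{s,t} \<in> E"
    and sw: "{s,w} \<in> E" and tw: "{t,w} \<notin> E" and wt: "w \<noteq> t"
  shows "\<exists>E'. two_terminal_graph n m E' s t \<and> {s,t} \<in> E' \<and> d_stronger 3 m E' s t E s t"
proof (cases "\<exists>b. {w,b} \<in> E \<and> b \<noteq> s")
  case True
  then obtain b where b: "{w,b} \<in> E" "b \<noteq> s" by blast
  moreover have "b \<noteq> t" using b tw by (auto simp: insert_commute)
  ultimately show ?thesis
    using two_terminal_graph_redirect_to_terminal[OF G st sw tw wt]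
      terminal_edge_redirect_to_terminal[OF G st sw tw wt]
      d_stronger_redirect_to_terminal[OF G st sw tw wt] by blast
next
  case False
  then show ?thesis
    using d_stronger_pendant_neighbour[OF G m st sw _ wt] by blast
qed

lemma d_stronger_with_terminal_edge:
  assumes G: "two_terminal_graph n m E s t" and m: "5 \<le> m" and not_twins: "\<not> true_twins E s t"
  shows "\<exists>E'. two_terminal_graph n m E' s t \<and> {s,t} \<in> E' \<and> d_stronger 3 m E' s t E s t"
proof (cases "{s,t} \<in> E")
  case False
  have st': "s \<noteq> t" and sn: "s < n" and tn: "t < n" and card: "card E = m"
    using G unfolding two_terminal_graph_def by simp_all
  obtain e where e: "e \<in> E" using card m by fastforce
  have "\<not> short_path {e} s t"
    using e False st' unfolding short_path_def by auto
  then have "d_stronger 3 (card E) (insert {s,t} (E - {e})) s t E s t"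
    using d_stronger_exchange[OF two_terminal_graph_finite[OF G] st' e False _ empty_subsetI]
    by (simp add: short_path_edge)
  then show ?thesis
    using two_terminal_graph_exchange[OF G e False st' sn tn] card by blast
next
  case True
  then obtain w where "w \<in> distinguishing_vertices n E s t"
    using true_twins_iff_no_distinguishing_vertices[OF G] not_twins by blast
  then have w: "w \<noteq> s" "w \<noteq> t" "{s,w} \<in> E \<longleftrightarrow> {t,w} \<notin> E"
    unfolding distinguishing_vertices_def by auto
  show ?thesis
  proof (cases "{s,w} \<in> E")
    case sw: True
    then show ?thesis
      using d_stronger_distinguishing_neighbour[OF G m True sw] w by blast
  next
    case False
    have "{t,s} \<in> E" "{t,w} \<in> E" using True False w by (auto simp: insert_commute)
    then obtain E' where "two_terminal_graph n m E' t s" "{t,s} \<in> E'" "d_stronger 3 m E' t s E t s"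
      using d_stronger_distinguishing_neighbour[of n m E t s w] G m False w
      by (auto simp: two_terminal_graph_swap)
    then show ?thesis
      by (auto simp: two_terminal_graph_swap d_stronger_swap insert_commute)
  qed
qed

theorem lemma8:
  fixes n m :: nat and E :: "nat set set" and s t :: nat
  assumes "n \<ge> 5" and "m \<ge> 5"
    and "two_terminal_graph n m E s t"
    and "\<not> true_twins E s t"
  shows "\<exists>E' s' t'. two_terminal_graph n m E' s' t' \<and> true_twins E' s' t' \<and>
           d_stronger 3 m E' s' t' E s t"
proof -
  obtain E1 where E1: "two_terminal_graph n m E1 s t" "{s,t} \<in> E1" "d_stronger 3 m E1 s t E s t"
    using d_stronger_with_terminal_edge[OF assms(3,2,4)] by blast
  obtain E2 where
    "two_terminal_graph n m E2 s t" "true_twins E2 s t" "weakly_stronger 3 E2 s t E1 s t"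
    using weakly_stronger_true_twins[OF E1(1) _ E1(2)] assms(1) by auto
  then show ?thesis
    using d_stronger_weakly_stronger_trans E1(3) by blast
qed

end
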